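(* For any complex numbers $a,b$ and any natural number $n\ge1$, \[ \Psi(a,b,n)=\sum_{i=0}^{\lfloor n/2\rfloor}\frac{n}{n-i}\binom{n-i}{i}(-a)^i(2a-b)^{\lfloor n/2\rfloor-i},\qquad \Phi(a,b,n)=\sum_{i=0}^{\lfloor (n-1)/2\rfloor}\binom{n-i-1}{i}(-a)^i(2a-b)^{\lfloor (n-1)/2\rfloor-i}. \]
   Context: $\delta(m)=1$ for $m$ odd and $0$ for $m$ even; $\lfloor\cdot\rfloor$ is the floor. $\Psi(a,b,n)$, $\Phi(a,b,n)$ are defined by $\Psi(a,b,0)=2$, $\Psi(a,b,1)=1$, $\Psi(a,b,n+1)=(2a-b)^{\delta(n)}\Psi(a,b,n)-a\Psi(a,b,n-1)$ and $\Phi(a,b,0)=0$, $\Phi(a,b,1)=1$, $\Phi(a,b,n+1)=(2a-b)^{\delta(n+1)}\Phi(a,b,n)-a\Phi(a,b,n-1)$ for $n\ge1$. *)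

theory Defs
  imports Complex_Main
begin

definition delta :: "nat \<Rightarrow> nat" where
  "delta m = (if odd m then 1 else 0)"

fun Psi :: "complex \<Rightarrow> complex \<Rightarrow> nat \<Rightarrow> complex" where
  "Psi a b 0 = 2"
| "Psi a b (Suc 0) = 1"
| "Psi a b (Suc (Suc n)) =
     (2*a - b) ^ delta (Suc n) * Psi a b (Suc n) - a * Psi a b n"

fun Phi :: "complex \<Rightarrow> complex \<Rightarrow> nat \<Rightarrow> complex" where
  "Phi a b 0 = 0"
| "Phi a b (Suc 0) = 1"
| "Phi a b (Suc (Suc n)) =
     (2*a - b) ^ delta (Suc (Suc n)) * Phi a b (Suc n) - a * Phi a b n"

end

theory Submission
  imports Defs
begin

(* With x = -a and c = 2a - b let G(N) = sum_{i <= N div 2} C(N-i, i) x^i c^(N div 2 - i).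
   Pascal's rule gives G(N+2) = c^delta(N+1) G(N+1) + x G(N); the factor c^delta(N+1) appears
   because the top exponent N div 2 only grows at every other step.  This is the recurrence of
   Phi shifted by one, so Phi(n) = G(n-1).  Psi is the Lucas-type companion
   Psi(n) = G(n) - a G(n-2), and n/(n-i) C(n-i, i) = C(n-i, i) + C(n-i-1, i-1) merges these two
   sums into the claimed one. *)

(* G(N) with the top exponent m made a free parameter, so that Pascal's rule applies without
   any floors. *)
definition fib_sum_to :: "'a::comm_ring_1 \<Rightarrow> 'a \<Rightarrow> nat \<Rightarrow> nat \<Rightarrow> 'a" where
  "fib_sum_to x c N m = (\<Sum>i\<le>m. of_nat ((N - i) choose i) * x ^ i * c ^ (m - i))"

definition fib_sum :: "'a::comm_ring_1 \<Rightarrow> 'a \<Rightarrow> nat \<Rightarrow> 'a" where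
  "fib_sum x c N = fib_sum_to x c N (N div 2)"

lemma delta_Suc_Suc: "delta (Suc (Suc n)) = delta n"
  by (simp add: delta_def)

lemma choose_Suc_diff_Suc: "(Suc N - j) choose Suc j = ((N - j) choose Suc j) + ((N - j) choose j)"
proof (cases "j \<le> N")
  case True
  then have "Suc N - j = Suc (N - j)" by simp
  then show ?thesis by simp
qed simp

lemma fib_sum_to_Suc_Suc:
  "fib_sum_to x c (Suc (Suc N)) (Suc m) = fib_sum_to x c (Suc N) (Suc m) + x * fib_sum_to x c N m"
proof -
  have "of_nat ((Suc N - i) choose Suc i) * x ^ Suc i * c ^ (m - i)
      = of_nat ((N - i) choose Suc i) * x ^ Suc i * c ^ (m - i)
        + x * (of_nat ((N - i) choose i) * x ^ i * c ^ (m - i))" for i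
    by (simp only: choose_Suc_diff_Suc of_nat_add) (simp add: algebra_simps)
  then show ?thesis
    unfolding fib_sum_to_def sum.atMost_Suc_shift sum_distrib_left
    by (simp add: sum.distrib)
qed

lemma fib_sum_to_ge_half:
  assumes "N div 2 \<le> m"
  shows "fib_sum_to x c N m = c ^ (m - N div 2) * fib_sum x c N"
proof -
  have "fib_sum_to x c N m = (\<Sum>i\<le>N div 2. of_nat ((N - i) choose i) * x ^ i * c ^ (m - i))"
    unfolding fib_sum_to_def
  proof (rule sum.mono_neutral_right)
    show "\<forall>i\<in>{..m} - {..N div 2}. of_nat ((N - i) choose i) * x ^ i * c ^ (m - i) = 0"
    proof
      fix i assume "i \<in> {..m} - {..N div 2}"
      then have "N - i < i" by auto
      then show "of_nat ((N - i) choose i) * x ^ i * c ^ (m - i) = 0" by (simp add: binomial_eq_0)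
    qed
  qed (use assms in auto)
  also have "\<dots> = c ^ (m - N div 2) * fib_sum x c N"
    unfolding fib_sum_def fib_sum_to_def sum_distrib_left
  proof (intro sum.cong refl)
    fix i assume "i \<in> {..N div 2}"
    then have "m - i = (m - N div 2) + (N div 2 - i)" using assms by auto
    then show "of_nat ((N - i) choose i) * x ^ i * c ^ (m - i)
        = c ^ (m - N div 2) * (of_nat ((N - i) choose i) * x ^ i * c ^ (N div 2 - i))"
      by (simp add: power_add)
  qed
  finally show ?thesis .
qed

lemma fib_sum_Suc_Suc:
  "fib_sum x c (Suc (Suc N)) = c ^ delta (Suc N) * fib_sum x c (Suc N) + x * fib_sum x c N"
proof -
  have "Suc N div 2 \<le> Suc (N div 2)" "Suc (N div 2) - Suc N div 2 = delta (Suc N)"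
    by (auto simp: delta_def)
  then have "fib_sum_to x c (Suc N) (Suc (N div 2)) = c ^ delta (Suc N) * fib_sum x c (Suc N)"
    by (simp only: fib_sum_to_ge_half)
  moreover have "fib_sum x c (Suc (Suc N)) = fib_sum_to x c (Suc N) (Suc (N div 2)) + x * fib_sum x c N"
    by (simp add: fib_sum_def fib_sum_to_Suc_Suc)
  ultimately show ?thesis by simp
qed

lemma fib_sum_0 [simp]: "fib_sum x c 0 = 1"
  by (simp add: fib_sum_def fib_sum_to_def)

lemma fib_sum_1 [simp]: "fib_sum x c (Suc 0) = 1"
  by (simp add: fib_sum_def fib_sum_to_def)

lemma Phi_Suc_eq_fib_sum: "Phi a b (Suc N) = fib_sum (-a) (2*a - b) N"
proof -
  let ?G = "fib_sum (-a) (2*a - b)"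
  have "Phi a b (Suc N) = ?G N \<and> Phi a b (Suc (Suc N)) = ?G (Suc N)"
  proof (induction N)
    case 0
    then show ?case by (simp add: delta_def)
  next
    case (Suc N)
    then have "Phi a b (Suc N) = ?G N" "Phi a b (Suc (Suc N)) = ?G (Suc N)" by auto
    then have "Phi a b (Suc (Suc (Suc N))) = (2*a - b) ^ delta (Suc N) * ?G (Suc N) + (-a) * ?G N"
      by (simp only: Phi.simps(3) delta_Suc_Suc) simp
    with \<open>Phi a b (Suc (Suc N)) = ?G (Suc N)\<close> show ?case
      by (simp only: fib_sum_Suc_Suc)
  qed
  then show ?thesis ..
qed

lemma Psi_Suc_Suc_eq_fib_sum:
  "Psi a b (Suc (Suc N)) = fib_sum (-a) (2*a - b) (Suc (Suc N)) - a * fib_sum (-a) (2*a - b) N"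
proof -
  let ?c = "2*a - b" and ?G = "fib_sum (-a) (2*a - b)"
  have "Psi a b (Suc (Suc N)) = ?G (Suc (Suc N)) - a * ?G N
      \<and> Psi a b (Suc (Suc (Suc N))) = ?G (Suc (Suc (Suc N))) - a * ?G (Suc N)"
  proof (induction N)
    case 0
    then show ?case by (simp add: fib_sum_Suc_Suc delta_def)
  next
    case (Suc N)
    then have IH: "Psi a b (Suc (Suc N)) = ?G (Suc (Suc N)) - a * ?G N"
      "Psi a b (Suc (Suc (Suc N))) = ?G (Suc (Suc (Suc N))) - a * ?G (Suc N)" by auto
    have "Psi a b (Suc (Suc (Suc (Suc N))))
        = ?c ^ delta (Suc N) * Psi a b (Suc (Suc (Suc N))) - a * Psi a b (Suc (Suc N))"
      by (simp only: Psi.simps(3) delta_Suc_Suc)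
    also have "\<dots> = ?c ^ delta (Suc N) * ?G (Suc (Suc (Suc N)))
        - a * (?c ^ delta (Suc N) * ?G (Suc N) + (-a) * ?G N) - a * ?G (Suc (Suc N))"
      unfolding IH fib_sum_Suc_Suc[of _ _ N] by (simp add: algebra_simps)
    also have "\<dots> = ?G (Suc (Suc (Suc (Suc N)))) - a * ?G (Suc (Suc N))"
      by (simp only: fib_sum_Suc_Suc[of _ _ "Suc (Suc N)"] fib_sum_Suc_Suc[of _ _ N] delta_Suc_Suc)
        (simp add: algebra_simps)
    finally show ?case using IH(2) by blast
  qed
  then show ?thesis ..
qed

lemma lucas_binomial_coeff:
  "(of_nat (k + j + 2) / of_nat (Suc k) :: 'a::field_char_0) * of_nat (Suc k choose Suc j)
    = of_nat (Suc k choose Suc j) + of_nat (k choose j)"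
proof -
  have "of_nat (k + j + 2) * of_nat (Suc k choose Suc j)
      = (of_nat (Suc k) * of_nat (Suc k choose Suc j) + of_nat (Suc j * (Suc k choose Suc j)) :: 'a)"
    by (simp add: algebra_simps)
  also have "\<dots> = of_nat (Suc k) * (of_nat (Suc k choose Suc j) + of_nat (k choose j))"
    by (simp only: Suc_times_binomial of_nat_mult distrib_left)
  finally show ?thesis
    by (simp add: field_simps del: of_nat_Suc)
qed

lemma lucas_sum_eq_fib_sum:
  fixes x c :: "'a::field_char_0"
  shows "(\<Sum>i=0..Suc (Suc N) div 2. of_nat (Suc (Suc N)) / of_nat (Suc (Suc N) - i)
            * of_nat ((Suc (Suc N) - i) choose i) * x ^ i * c ^ (Suc (Suc N) div 2 - i))
    = fib_sum x c (Suc (Suc N)) + x * fib_sum x c N"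
proof -
  have summand: "of_nat (Suc (Suc N)) / of_nat (Suc (Suc N) - Suc j)
        * of_nat ((Suc (Suc N) - Suc j) choose Suc j) * x ^ Suc j * c ^ (Suc (N div 2) - Suc j)
      = of_nat ((Suc (Suc N) - Suc j) choose Suc j) * x ^ Suc j * c ^ (Suc (N div 2) - Suc j)
        + x * (of_nat ((N - j) choose j) * x ^ j * c ^ (N div 2 - j))"
    if "j \<in> {..N div 2}" for j
  proof -
    from that obtain k where N: "N = k + j"
      by (metis atMost_iff add.commute le_add_diff_inverse div_le_dividend le_trans)
    show ?thesis
      using lucas_binomial_coeff[of k j, where 'a='a] by (simp add: N algebra_simps)
  qed
  have half: "Suc (Suc N) div 2 = Suc (N div 2)" by simp
  show ?thesis
    unfolding atLeast0AtMost fib_sum_def fib_sum_to_def half sum.atMost_Suc_shift sum_distrib_left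
    by (simp only: summand sum.distrib cong: sum.cong) (simp del: of_nat_Suc)
qed

theorem theorem5p2:
  fixes a b :: complex and n :: nat
  assumes "n \<ge> 1"
  shows "Psi a b n = (\<Sum>i=0..n div 2. (of_nat n / of_nat (n - i)) * of_nat ((n - i) choose i)
                         * (-a)^i * (2*a - b)^(n div 2 - i))
     \<and> Phi a b n = (\<Sum>i=0..(n - 1) div 2. of_nat ((n - i - 1) choose i)
                         * (-a)^i * (2*a - b)^((n - 1) div 2 - i))"
proof -
  obtain M where n: "n = Suc M" using assms by (cases n) auto
  show ?thesis
  proof (cases M)
    case 0
    then show ?thesis by (simp add: n)
  next
    case (Suc N)
    have "Phi a b n = fib_sum (-a) (2*a - b) (Suc N)"
      by (simp add: n Suc Phi_Suc_eq_fib_sum)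
    then show ?thesis
      unfolding n Suc Psi_Suc_Suc_eq_fib_sum lucas_sum_eq_fib_sum
      by (simp add: fib_sum_def fib_sum_to_def atLeast0AtMost)
  qed
qed

end
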